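(* A rooted labeled forest that avoids $123$ avoids $3142$ if and only if it is a $P_2$-forest.
   Context: Rooted labeled forests are unordered forests with a distinguished root in each component and distinct integer labels $L(v)$. The ancestors of $v$ are the vertices on the path from the root of its component to $v$ (including $v$). An instance of a pattern $\pi$ of length $k$ is a sequence $v_1,\dots,v_k$ with $v_i$ a strict ancestor of $v_{i+1}$ and labels in the same relative order as $\pi$; a forest avoids $\pi$ if it has no instance. A vertex $v$ is a top-down minimum (TDM) if $L(u)\ge L(v)$ for every ancestor $u$ of $v$; other vertices are non-TDM. For a non-TDM vertex $v$, its segment is the set of TDM ancestors $u$ of $v$ with $L(u)<L(v)$ (these are the TDM vertices on the path from some vertex down to $v$); the top of the segment is the vertex of the segment closest to the root (equivalently, the one with the greatest label). Two vertices are comparable if one is an ancestor of the other. A $P_2$-forest is a forest in which, whenever two comparable non-TDM vertices have intersecting segments, the tops of their segments coincide. *)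

theory Defs
  imports Main
begin

text \<open>A rooted forest on a finite vertex set V is given by a partial parent map
  par: par v = None means v is a root; par v = Some u means u is the parent of v.\<close>

definition parent_rel :: "'a set \<Rightarrow> ('a \<Rightarrow> 'a option) \<Rightarrow> ('a \<times> 'a) set" where
  "parent_rel V par = {(v, u). v \<in> V \<and> par v = Some u}"

definition rooted_forest :: "'a set \<Rightarrow> ('a \<Rightarrow> 'a option) \<Rightarrow> bool" where
  "rooted_forest V par \<longleftrightarrow> finite V \<and>
     (\<forall>v\<in>V. \<forall>u. par v = Some u \<longrightarrow> u \<in> V) \<and> acyclic (parent_rel V par)"

definition anc :: "'a set \<Rightarrow> ('a \<Rightarrow> 'a option) \<Rightarrow> 'a \<Rightarrow> 'a \<Rightarrow> bool" where
  "anc V par u v \<longleftrightarrow> v \<in> V \<and> (v, u) \<in> (parent_rel V par)\<^sup>*"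

definition strict_anc :: "'a set \<Rightarrow> ('a \<Rightarrow> 'a option) \<Rightarrow> 'a \<Rightarrow> 'a \<Rightarrow> bool" where
  "strict_anc V par u v \<longleftrightarrow> v \<in> V \<and> (v, u) \<in> (parent_rel V par)\<^sup>+"

definition contains_pattern ::
  "'a set \<Rightarrow> ('a \<Rightarrow> 'a option) \<Rightarrow> ('a \<Rightarrow> int) \<Rightarrow> nat list \<Rightarrow> bool" where
  "contains_pattern V par L pi \<longleftrightarrow>
     (\<exists>vs. length vs = length pi \<and> set vs \<subseteq> V \<and>
        (\<forall>i. i + 1 < length vs \<longrightarrow> strict_anc V par (vs ! i) (vs ! (i + 1))) \<and>
        (\<forall>i < length vs. \<forall>j < length vs. L (vs ! i) < L (vs ! j) \<longleftrightarrow> pi ! i < pi ! j))"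

definition avoids :: "'a set \<Rightarrow> ('a \<Rightarrow> 'a option) \<Rightarrow> ('a \<Rightarrow> int) \<Rightarrow> nat list \<Rightarrow> bool" where
  "avoids V par L pi \<longleftrightarrow> \<not> contains_pattern V par L pi"

definition TDM :: "'a set \<Rightarrow> ('a \<Rightarrow> 'a option) \<Rightarrow> ('a \<Rightarrow> int) \<Rightarrow> 'a \<Rightarrow> bool" where
  "TDM V par L v \<longleftrightarrow> v \<in> V \<and> (\<forall>u. anc V par u v \<longrightarrow> L u \<ge> L v)"

definition segment :: "'a set \<Rightarrow> ('a \<Rightarrow> 'a option) \<Rightarrow> ('a \<Rightarrow> int) \<Rightarrow> 'a \<Rightarrow> 'a set" where
  "segment V par L v = {u. anc V par u v \<and> TDM V par L u \<and> L u < L v}"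

definition seg_top :: "'a set \<Rightarrow> ('a \<Rightarrow> 'a option) \<Rightarrow> ('a \<Rightarrow> int) \<Rightarrow> 'a \<Rightarrow> 'a" where
  "seg_top V par L v =
     (THE u. u \<in> segment V par L v \<and> (\<forall>w\<in>segment V par L v. L w \<le> L u))"

definition comparable :: "'a set \<Rightarrow> ('a \<Rightarrow> 'a option) \<Rightarrow> 'a \<Rightarrow> 'a \<Rightarrow> bool" where
  "comparable V par u v \<longleftrightarrow> anc V par u v \<or> anc V par v u"

definition P2_forest :: "'a set \<Rightarrow> ('a \<Rightarrow> 'a option) \<Rightarrow> ('a \<Rightarrow> int) \<Rightarrow> bool" where
  "P2_forest V par L \<longleftrightarrow>
     (\<forall>v\<in>V. \<forall>w\<in>V. \<not> TDM V par L v \<longrightarrow> \<not> TDM V par L w \<longrightarrow> comparable V par v w \<longrightarrow>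
        segment V par L v \<inter> segment V par L w \<noteq> {} \<longrightarrow>
        seg_top V par L v = seg_top V par L w)"

end

theory Submission
  imports Defs
begin

text \<open>The TDM ancestors of a vertex form a chain along which labels decrease downwards; in
  particular the top of a segment is an ancestor of every element of the segment.
  If a b c d is an instance of 3142, avoidance of 123 forces a to be a TDM, so a lies in the
  segment of c, while a TDM ancestor of b with label at most L b lies in the segments of both
  c and d. The top of the segment of d has label below L d < L a, so it is not the top of the
  segment of c.
  Conversely, let v be an ancestor of w whose segments share s but have distinct tops t_v, t_w.
  Then t_w lies above s and hence above v. If L t_w < L t_v, then t_v lies above w outside its
  segment, and t_v t_w v w is an instance of 3142; otherwise t_w lies above v outside its
  segment, and s v w is an instance of 123.\<close>

lemma anc_in_V:
  assumes "rooted_forest V par" "anc V par u v"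
  shows "u \<in> V" "v \<in> V"
proof -
  have "(v, u) \<in> (parent_rel V par)\<^sup>*" "v \<in> V"
    using assms(2) by (auto simp: anc_def)
  then show "u \<in> V"
    by (induction rule: rtrancl_induct) (use assms(1) in \<open>auto simp: parent_rel_def rooted_forest_def\<close>)
  show "v \<in> V"
    using assms(2) by (simp add: anc_def)
qed

lemma anc_refl: "v \<in> V \<Longrightarrow> anc V par v v"
  by (simp add: anc_def)

lemma anc_trans: "anc V par u v \<Longrightarrow> anc V par w u \<Longrightarrow> anc V par w v"
  by (auto simp: anc_def)

lemma strict_anc_iff_anc_neq:
  assumes "rooted_forest V par"
  shows "strict_anc V par u v \<longleftrightarrow> anc V par u v \<and> u \<noteq> v"
proof -
  have "acyclic (parent_rel V par)"
    using assms by (simp add: rooted_forest_def)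
  then show ?thesis
    by (auto simp: strict_anc_def anc_def acyclic_def rtrancl_eq_or_trancl)
qed

lemma anc_linear:
  assumes "rooted_forest V par" "anc V par u w" "anc V par u' w"
  shows "anc V par u u' \<or> anc V par u' u"
proof -
  have "single_valued (parent_rel V par)"
    by (auto simp: single_valued_def parent_rel_def)
  moreover have "(w, u) \<in> (parent_rel V par)\<^sup>*" "(w, u') \<in> (parent_rel V par)\<^sup>*"
    using assms(2,3) by (simp_all add: anc_def)
  ultimately have "(u, u') \<in> (parent_rel V par)\<^sup>* \<or> (u', u) \<in> (parent_rel V par)\<^sup>*"
    by (rule single_valued_confluent)
  moreover have "u \<in> V" "u' \<in> V"
    using anc_in_V(1)[OF assms(1,2)] anc_in_V(1)[OF assms(1,3)] .
  ultimately show ?thesis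
    by (auto simp: anc_def)
qed

lemma TDM_label_le_anc: "TDM V par L y \<Longrightarrow> anc V par x y \<Longrightarrow> L y \<le> L x"
  by (simp add: TDM_def)

lemma TDM_anc_iff_label_le:
  assumes "rooted_forest V par" "inj_on L V"
    and "anc V par x w" "anc V par y w" "TDM V par L x" "TDM V par L y"
  shows "anc V par x y \<longleftrightarrow> L y \<le> L x"
proof
  assume "L y \<le> L x"
  from anc_linear[OF assms(1,3,4)] show "anc V par x y"
  proof
    assume "anc V par y x"
    then have "L x = L y"
      using \<open>L y \<le> L x\<close> TDM_label_le_anc[OF assms(5)] by (simp add: order_antisym)
    then have "x = y"
      using inj_onD[OF assms(2)] anc_in_V(1)[OF assms(1,3)] anc_in_V(1)[OF assms(1,4)] by blast
    then show ?thesis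
      using \<open>anc V par y x\<close> by simp
  qed
qed (rule TDM_label_le_anc[OF assms(6)])

lemma finite_ancestors:
  assumes "rooted_forest V par"
  shows "finite {u. anc V par u v}"
proof (rule finite_subset)
  show "{u. anc V par u v} \<subseteq> V"
    using anc_in_V(1)[OF assms] by blast
qed (use assms in \<open>simp add: rooted_forest_def\<close>)

lemma exists_TDM_anc_label_le:
  assumes "rooted_forest V par" "b \<in> V"
  obtains m where "anc V par m b" "TDM V par L m" "L m \<le> L b"
proof -
  let ?A = "{u. anc V par u b}"
  have "b \<in> ?A"
    using assms(2) by (simp add: anc_refl)
  then obtain m where m: "m \<in> ?A" "Min (L ` ?A) = L m"
    using obtains_MIN[OF finite_ancestors[OF assms(1)]] by blast
  then have m_least: "L m \<le> L u" if "u \<in> ?A" for u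
    using that Min_le[of "L ` ?A" "L u"] finite_ancestors[OF assms(1)] by simp
  have "TDM V par L m"
    unfolding TDM_def
  proof (intro conjI allI impI)
    show "m \<in> V"
      using m(1) anc_in_V(1)[OF assms(1)] by blast
    fix u
    assume "anc V par u m"
    with m(1) have "anc V par u b"
      by (simp add: anc_trans)
    then show "L m \<le> L u"
      by (simp add: m_least)
  qed
  with m m_least[OF \<open>b \<in> ?A\<close>] that show ?thesis
    by blast
qed

lemma
  assumes "rooted_forest V par" "inj_on L V" "segment V par L v \<noteq> {}"
  shows seg_top_in_segment: "seg_top V par L v \<in> segment V par L v"
    and seg_top_greatest: "x \<in> segment V par L v \<Longrightarrow> L x \<le> L (seg_top V par L v)"
proof -
  let ?S = "segment V par L v"
  have "?S \<subseteq> {u. anc V par u v}"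
    by (auto simp: segment_def)
  then have "?S \<subseteq> V" "finite ?S"
    using anc_in_V(1)[OF assms(1)] finite_subset[OF _ finite_ancestors[OF assms(1)]] by blast+
  then obtain t where t: "t \<in> ?S" "Max (L ` ?S) = L t"
    using obtains_MAX[OF _ assms(3)] by blast
  have t_greatest: "L x \<le> L t" if "x \<in> ?S" for x
    using Max_ge[of "L ` ?S" "L x"] \<open>finite ?S\<close> that t(2) by simp
  have "seg_top V par L v = t"
    unfolding seg_top_def
  proof (rule the_equality)
    show "t \<in> ?S \<and> (\<forall>x\<in>?S. L x \<le> L t)"
      using t(1) t_greatest by blast
    fix u
    assume u: "u \<in> ?S \<and> (\<forall>x\<in>?S. L x \<le> L u)"
    then have "L u = L t"
      using t(1) t_greatest by (simp add: order_antisym)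
    moreover have "u \<in> V" "t \<in> V"
      using u t(1) \<open>?S \<subseteq> V\<close> by blast+
    ultimately show "u = t"
      using inj_onD[OF assms(2)] by blast
  qed
  then show "seg_top V par L v \<in> ?S" "x \<in> ?S \<Longrightarrow> L x \<le> L (seg_top V par L v)"
    using t(1) t_greatest by simp_all
qed

lemma seg_top_anc:
  assumes "rooted_forest V par" "inj_on L V" "s \<in> segment V par L w"
  shows "anc V par (seg_top V par L w) s"
proof -
  have "segment V par L w \<noteq> {}"
    using assms(3) by blast
  then have "anc V par (seg_top V par L w) w" "TDM V par L (seg_top V par L w)"
    using seg_top_in_segment[OF assms(1,2)] by (simp_all add: segment_def)
  moreover have "anc V par s w" "TDM V par L s"
    using assms(3) by (simp_all add: segment_def)
  ultimately show ?thesis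
    using TDM_anc_iff_label_le[OF assms(1,2)] seg_top_greatest[OF assms(1,2) _ assms(3)] assms(3)
    by blast
qed

lemma label_less_if_TDM_anc_notin_segment:
  assumes "rooted_forest V par" "inj_on L V"
    and "anc V par x v" "TDM V par L x" "\<not> TDM V par L v" "x \<notin> segment V par L v"
  shows "L v < L x"
proof -
  have "x \<noteq> v"
    using assms(4,5) by blast
  then have "L x \<noteq> L v"
    using inj_onD[OF assms(2)] anc_in_V[OF assms(1,3)] by blast
  moreover have "\<not> L x < L v"
    using assms(3,4,6) by (simp add: segment_def)
  ultimately show ?thesis
    by simp
qed

lemma contains_123I:
  assumes "a \<in> V" "b \<in> V" "c \<in> V" "strict_anc V par a b" "strict_anc V par b c"
    and "L a < L b" "L b < L c"
  shows "contains_pattern V par L [1, 2, 3]"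
  unfolding contains_pattern_def
proof (intro exI[of _ "[a, b, c]"] conjI allI impI)
  fix i
  assume "i + 1 < length [a, b, c]"
  then show "strict_anc V par ([a, b, c] ! i) ([a, b, c] ! (i + 1))"
    using assms by (auto simp: less_Suc_eq)
next
  fix i j
  assume "i < length [a, b, c]" "j < length [a, b, c]"
  then show "L ([a, b, c] ! i) < L ([a, b, c] ! j) \<longleftrightarrow> ([1, 2, 3] :: nat list) ! i < [1, 2, 3] ! j"
    using assms by (auto simp: less_Suc_eq)
qed (use assms in auto)

lemma contains_3142_iff:
  "contains_pattern V par L [3, 1, 4, 2] \<longleftrightarrow>
    (\<exists>a b c d. {a, b, c, d} \<subseteq> V \<and>
      strict_anc V par a b \<and> strict_anc V par b c \<and> strict_anc V par c d \<and>
      L b < L d \<and> L d < L a \<and> L a < L c)"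
proof
  assume "contains_pattern V par L [3, 1, 4, 2]"
  then obtain vs where len: "length vs = length ([3, 1, 4, 2] :: nat list)" and sub: "set vs \<subseteq> V"
    and chain: "\<forall>i. i + 1 < length vs \<longrightarrow> strict_anc V par (vs ! i) (vs ! (i + 1))"
    and lab: "\<forall>i < length vs. \<forall>j < length vs.
      L (vs ! i) < L (vs ! j) \<longleftrightarrow> ([3, 1, 4, 2] :: nat list) ! i < [3, 1, 4, 2] ! j"
    unfolding contains_pattern_def by blast
  have "{vs ! 0, vs ! 1, vs ! 2, vs ! 3} \<subseteq> V"
    using sub len by (auto simp: less_Suc_eq)
  then show "\<exists>a b c d. {a, b, c, d} \<subseteq> V \<and>
      strict_anc V par a b \<and> strict_anc V par b c \<and> strict_anc V par c d \<and>
      L b < L d \<and> L d < L a \<and> L a < L c"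
    using chain[rule_format, of 0] chain[rule_format, of 1] chain[rule_format, of 2]
      lab[rule_format, of 1 3] lab[rule_format, of 3 0] lab[rule_format, of 0 2] len
    by (auto simp: numeral_eq_Suc)
next
  assume "\<exists>a b c d. {a, b, c, d} \<subseteq> V \<and>
      strict_anc V par a b \<and> strict_anc V par b c \<and> strict_anc V par c d \<and>
      L b < L d \<and> L d < L a \<and> L a < L c"
  then obtain a b c d where "{a, b, c, d} \<subseteq> V"
      "strict_anc V par a b" "strict_anc V par b c" "strict_anc V par c d"
      "L b < L d" "L d < L a" "L a < L c"
    by blast
  then show "contains_pattern V par L [3, 1, 4, 2]"
    unfolding contains_pattern_def
    by (intro exI[of _ "[a, b, c, d]"]) (auto simp: less_Suc_eq)
qed

lemma TDM_if_avoids_123: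
  assumes "rooted_forest V par" "avoids V par L [1, 2, 3]"
    and "strict_anc V par a c" "L a < L c"
  shows "TDM V par L a"
proof (rule ccontr)
  have "anc V par a c"
    using assms(3) strict_anc_iff_anc_neq[OF assms(1)] by simp
  then have "a \<in> V" "c \<in> V"
    using anc_in_V[OF assms(1)] by blast+
  assume "\<not> TDM V par L a"
  with \<open>a \<in> V\<close> obtain x where x: "anc V par x a" "L x < L a"
    by (auto simp: TDM_def not_le)
  then have "x \<in> V" "strict_anc V par x a"
    using anc_in_V(1)[OF assms(1)] strict_anc_iff_anc_neq[OF assms(1)] by auto
  then have "contains_pattern V par L [1, 2, 3]"
    using contains_123I[OF _ \<open>a \<in> V\<close> \<open>c \<in> V\<close> _ assms(3) x(2) assms(4)] by blast
  with assms(2) show False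
    by (simp add: avoids_def)
qed

lemma avoids_3142_if_P2_forest:
  assumes "rooted_forest V par" "inj_on L V" "avoids V par L [1, 2, 3]" "P2_forest V par L"
  shows "avoids V par L [3, 1, 4, 2]"
  unfolding avoids_def
proof
  assume "contains_pattern V par L [3, 1, 4, 2]"
  then obtain a b c d where V: "{a, b, c, d} \<subseteq> V"
    and chain: "strict_anc V par a b" "strict_anc V par b c" "strict_anc V par c d"
    and labels: "L b < L d" "L d < L a" "L a < L c"
    unfolding contains_3142_iff by blast
  have anc: "anc V par a b" "anc V par b c" "anc V par c d"
    using chain strict_anc_iff_anc_neq[OF assms(1)] by simp_all
  have "strict_anc V par a c"
    using chain(1,2) by (auto simp: strict_anc_def)
  then have "TDM V par L a"
    using TDM_if_avoids_123[OF assms(1,3)] labels by simp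
  then have a_seg_c: "a \<in> segment V par L c"
    using anc_trans[OF anc(2,1)] labels by (simp add: segment_def)
  obtain m where m: "anc V par m b" "TDM V par L m" "L m \<le> L b"
    using exists_TDM_anc_label_le[OF assms(1)] V by blast
  have "m \<in> segment V par L c" "m \<in> segment V par L d"
    using m anc_trans[OF anc(2) m(1)] anc_trans[OF anc_trans[OF anc(3,2)] m(1)] labels
    by (simp_all add: segment_def)
  moreover have "\<not> TDM V par L c" "\<not> TDM V par L d"
    using anc(2) anc_trans[OF anc(3,2)] labels by (auto simp: TDM_def)
  ultimately have "seg_top V par L c = seg_top V par L d"
    using assms(4) V anc(3) unfolding P2_forest_def comparable_def by blast
  then have "L a < L d"
    using a_seg_c seg_top_greatest[OF assms(1,2) _ a_seg_c]
      seg_top_in_segment[OF assms(1,2), of d] \<open>m \<in> segment V par L d\<close>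
    by (force simp: segment_def)
  with labels show False
    by simp
qed

lemma seg_top_eq_if_anc:
  assumes "rooted_forest V par" "inj_on L V"
    and "avoids V par L [1, 2, 3]" "avoids V par L [3, 1, 4, 2]"
    and "anc V par v w" "\<not> TDM V par L v" "\<not> TDM V par L w"
    and "s \<in> segment V par L v" "s \<in> segment V par L w"
  shows "seg_top V par L v = seg_top V par L w"
proof (rule ccontr)
  define t\<^sub>v where "t\<^sub>v = seg_top V par L v"
  define t\<^sub>w where "t\<^sub>w = seg_top V par L w"
  assume "seg_top V par L v \<noteq> seg_top V par L w"
  then have "t\<^sub>v \<noteq> t\<^sub>w"
    by (simp add: t\<^sub>v_def t\<^sub>w_def)
  have seg_v: "t\<^sub>v \<in> segment V par L v" "\<And>x. x \<in> segment V par L v \<Longrightarrow> L x \<le> L t\<^sub>v"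
    unfolding t\<^sub>v_def using assms(8) seg_top_in_segment[OF assms(1,2)] seg_top_greatest[OF assms(1,2)]
    by (metis empty_iff)+
  have seg_w: "t\<^sub>w \<in> segment V par L w" "\<And>x. x \<in> segment V par L w \<Longrightarrow> L x \<le> L t\<^sub>w"
    unfolding t\<^sub>w_def using assms(9) seg_top_in_segment[OF assms(1,2)] seg_top_greatest[OF assms(1,2)]
    by (metis empty_iff)+
  have v_V: "v \<in> V" and w_V: "w \<in> V"
    using anc_in_V[OF assms(1,5)] by simp_all
  have tv: "anc V par t\<^sub>v v" "TDM V par L t\<^sub>v" "t\<^sub>v \<in> V"
    using seg_v(1) anc_in_V(1)[OF assms(1)] by (auto simp: segment_def)
  have tw: "anc V par t\<^sub>w w" "TDM V par L t\<^sub>w" "t\<^sub>w \<in> V"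
    using seg_w(1) anc_in_V(1)[OF assms(1)] by (auto simp: segment_def)
  have tw_v: "anc V par t\<^sub>w v"
    using anc_trans[OF _ seg_top_anc[OF assms(1,2,9)]] assms(8) by (simp add: segment_def t\<^sub>w_def)
  have strict: "strict_anc V par x y" if "anc V par x y" "L x \<noteq> L y" for x y
    using that strict_anc_iff_anc_neq[OF assms(1)] by auto
  have "L t\<^sub>v \<noteq> L t\<^sub>w"
    using inj_onD[OF assms(2)] \<open>t\<^sub>v \<noteq> t\<^sub>w\<close> tv(3) tw(3) by blast
  then consider "L t\<^sub>w < L t\<^sub>v" | "L t\<^sub>v < L t\<^sub>w"
    by linarith
  then show False
  proof cases
    case 1
    have "t\<^sub>v \<notin> segment V par L w"
      using seg_w(2) 1 by fastforce
    then have "L w < L t\<^sub>v"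
      using label_less_if_TDM_anc_notin_segment[OF assms(1,2) anc_trans[OF assms(5) tv(1)] tv(2) assms(7)]
      by blast
    moreover have "anc V par t\<^sub>v t\<^sub>w"
      using TDM_anc_iff_label_le[OF assms(1,2) anc_trans[OF assms(5) tv(1)] tw(1) tv(2) tw(2)] 1
      by simp
    moreover have "L t\<^sub>w < L w" "L t\<^sub>v < L v"
      using seg_w(1) seg_v(1) by (simp_all add: segment_def)
    ultimately have "strict_anc V par t\<^sub>v t\<^sub>w" "strict_anc V par t\<^sub>w v" "strict_anc V par v w"
      using strict tw_v assms(5) 1 by simp_all
    then have "contains_pattern V par L [3, 1, 4, 2]"
      unfolding contains_3142_iff
      using tv(3) tw(3) v_V w_V \<open>L t\<^sub>w < L w\<close> \<open>L w < L t\<^sub>v\<close> \<open>L t\<^sub>v < L v\<close> by blast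
    with assms(4) show False
      by (simp add: avoids_def)
  next
    case 2
    have "t\<^sub>w \<notin> segment V par L v"
      using seg_v(2) 2 by fastforce
    then have "L v < L t\<^sub>w"
      using label_less_if_TDM_anc_notin_segment[OF assms(1,2) tw_v tw(2) assms(6)] by blast
    moreover have "s \<in> V" "anc V par s v" "L s < L v" "L t\<^sub>w < L w"
      using assms(8) seg_w(1) anc_in_V(1)[OF assms(1)] by (auto simp: segment_def)
    ultimately have "contains_pattern V par L [1, 2, 3]"
      using contains_123I[OF _ v_V w_V strict strict[OF assms(5)]] by simp
    with assms(3) show False
      by (simp add: avoids_def)
  qed
qed

theorem lemma3p15:
  fixes V :: "'a set" and par :: "'a \<Rightarrow> 'a option" and L :: "'a \<Rightarrow> int"
  assumes "rooted_forest V par"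
    and "inj_on L V"
    and "avoids V par L [1, 2, 3]"
  shows "avoids V par L [3, 1, 4, 2] \<longleftrightarrow> P2_forest V par L"
proof
  assume "avoids V par L [3, 1, 4, 2]"
  then have "seg_top V par L v = seg_top V par L w"
    if "comparable V par v w" "\<not> TDM V par L v" "\<not> TDM V par L w"
      "s \<in> segment V par L v" "s \<in> segment V par L w" for v w s
    using that seg_top_eq_if_anc[OF assms] unfolding comparable_def by (elim disjE) auto
  then show "P2_forest V par L"
    unfolding P2_forest_def by blast
qed (rule avoids_3142_if_P2_forest[OF assms])

end
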